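(* Let $X$ be a separable Banach space and let $C$ be a weak*-compact convex subset of $X^{**}$ with $C\cap X=\emptyset$. Then there is a nested sequence $(C_n)$ of closed convex subsets of $X$ such that $C\subset\bigcap_n\overline{C_n}^{w^*}$ and, for every $x\in X$, $$\mathrm{dist}(x,C)=\lim_{n\to\infty}\mathrm{dist}(x,C_n).$$
   Context: $X$ is regarded as a subspace of $X^{**}$ via the canonical embedding; $\overline{A}^{w^*}$ denotes the weak*-closure in $X^{**}$ of $A\subset X$; distances are computed with the norm of $X^{**}$ (which extends that of $X$). Nested means $C_{n+1}\subset C_n$ for all $n$. *)

theory Defs
  imports "HOL-Analysis.Analysis"
begin

text \<open>Dual of X: 'a \<Rightarrow>L real; bidual: ('a \<Rightarrow>L real) \<Rightarrow>L real.\<close>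

definition canon :: "'a::real_normed_vector \<Rightarrow> (('a \<Rightarrow>\<^sub>L real) \<Rightarrow>\<^sub>L real)" where
  "canon x = Blinfun (\<lambda>f. blinfun_apply f x)"

definition wstar :: "(('a::real_normed_vector \<Rightarrow>\<^sub>L real) \<Rightarrow>\<^sub>L real) topology" where
  "wstar = topology_generated_by {{\<phi>. blinfun_apply \<phi> f \<in> U} | f U. open U}"

definition separable_space :: "'a::metric_space itself \<Rightarrow> bool" where
  "separable_space _ \<longleftrightarrow> (\<exists>D::'a set. countable D \<and> closure D = UNIV)"

end

theory Submission
  imports Defs
begin

text \<open>
  Let \<open>\<sigma> f = sup {c f | c \<in> C}\<close> be the support function of \<open>C\<close> on the dual. A minimax
  argument, reduced by induction to a separation in the plane and combined with the weak*
  compactness of \<open>C\<close>, gives the distance formula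
  \<open>dist (x, C) = sup {f x - \<sigma> f | \<parallel>f\<parallel> \<le> 1}\<close>. Both sides are 1-Lipschitz in \<open>x\<close>, so on a
  separable space countably many functionals \<open>f\<^sub>k\<close> realise this supremum at every \<open>x\<close>.
  Take \<open>C\<^sub>n = {y. f\<^sub>k y \<le> \<sigma> f\<^sub>k + 1/(n+1) for k \<le> n}\<close>: the \<open>f\<^sub>k\<close> bound \<open>dist (x, C\<^sub>n)\<close>
  from below. Conversely, by Helly's lemma (again a minimax argument) every \<open>c \<in> C\<close> is a
  weak* limit of points \<open>x + z\<close> of \<open>C\<^sub>n\<close> with \<open>\<parallel>z\<parallel> < r\<close> for any given \<open>r > \<parallel>c - x\<parallel>\<close>, which
  yields both the weak* closure statement and the upper bound on \<open>dist (x, C\<^sub>n)\<close>.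
\<close>

section \<open>Minimax for affine functions\<close>

definition affine_on :: "'a::real_vector set \<Rightarrow> ('a \<Rightarrow> real) \<Rightarrow> bool" where
  "affine_on Y u \<longleftrightarrow> (\<forall>y1\<in>Y. \<forall>y2\<in>Y. \<forall>m. 0 \<le> m \<and> m \<le> 1 \<longrightarrow>
     u ((1 - m) *\<^sub>R y1 + m *\<^sub>R y2) = (1 - m) * u y1 + m * u y2)"

lemma affine_onD:
  "affine_on Y u \<Longrightarrow> y1 \<in> Y \<Longrightarrow> y2 \<in> Y \<Longrightarrow> 0 \<le> m \<Longrightarrow> m \<le> 1 \<Longrightarrow>
   u ((1 - m) *\<^sub>R y1 + m *\<^sub>R y2) = (1 - m) * u y1 + m * u y2"
  unfolding affine_on_def by blast

lemma affine_on_subset: "affine_on Y u \<Longrightarrow> Z \<subseteq> Y \<Longrightarrow> affine_on Z u"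
  unfolding affine_on_def by blast

lemma affine_on_linear: "linear f \<Longrightarrow> affine_on Y f"
  unfolding affine_on_def by (simp add: linear_add linear_scale)

lemma affine_on_diff: "affine_on Y u \<Longrightarrow> affine_on Y v \<Longrightarrow> affine_on Y (\<lambda>y. u y - v y)"
  unfolding affine_on_def by (simp add: algebra_simps)

lemma affine_on_const: "affine_on Y (\<lambda>y. a)"
  unfolding affine_on_def by (simp add: algebra_simps)

lemma convex_affine_strict_sublevel:
  assumes "convex Y" "affine_on Y u"
  shows "convex {y \<in> Y. u y < t}"
  unfolding convex_alt
proof (intro ballI allI impI)
  fix y1 y2 and m :: real
  assume "y1 \<in> {y \<in> Y. u y < t}" "y2 \<in> {y \<in> Y. u y < t}" "0 \<le> m \<and> m \<le> 1"
  then show "(1 - m) *\<^sub>R y1 + m *\<^sub>R y2 \<in> {y \<in> Y. u y < t}"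
    using assms convex_bound_lt[of "u y1" t "u y2" "1 - m" m]
    by (auto simp: convex_alt affine_onD)
qed

lemma convex_image_affine_pair:
  assumes "convex Y" "affine_on Y u" "affine_on Y v"
  shows "convex ((\<lambda>y. (u y, v y)) ` Y)"
  unfolding convex_alt
proof (intro ballI allI impI)
  fix p q and m :: real
  assume "p \<in> (\<lambda>y. (u y, v y)) ` Y" "q \<in> (\<lambda>y. (u y, v y)) ` Y" "0 \<le> m \<and> m \<le> 1"
  then obtain y1 y2 where "y1 \<in> Y" "y2 \<in> Y" "p = (u y1, v y1)" "q = (u y2, v y2)" "0 \<le> m" "m \<le> 1"
    by auto
  moreover from this have "(1 - m) *\<^sub>R y1 + m *\<^sub>R y2 \<in> Y"
    using \<open>convex Y\<close> by (simp add: convex_alt)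
  ultimately show "(1 - m) *\<^sub>R p + m *\<^sub>R q \<in> (\<lambda>y. (u y, v y)) ` Y"
    using affine_onD[OF assms(2)] affine_onD[OF assms(3)]
    by (auto intro!: image_eqI[where x = "(1 - m) *\<^sub>R y1 + m *\<^sub>R y2"])
qed

lemma nonpos_if_bounded_below_on_lessThan:
  fixes a c t :: real
  assumes "\<And>q. q < t \<Longrightarrow> c \<le> a * q"
  shows "a \<le> 0"
proof (rule ccontr)
  assume "\<not> a \<le> 0"
  then have "a * min (t - 1) ((c - 1) / a) \<le> c - 1"
    by (simp add: min_def mult_left_mono pos_le_divide_eq mult.commute)
  moreover have "c \<le> a * min (t - 1) ((c - 1) / a)"
    by (rule assms) simp
  ultimately show False by simp
qed

lemma halfplane_above_lower_quadrant:
  fixes a1 a2 b t :: real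
  assumes "\<And>q1 q2. q1 < t \<Longrightarrow> q2 < t \<Longrightarrow> b \<le> a1 * q1 + a2 * q2"
  shows "a1 \<le> 0" "a2 \<le> 0" "b \<le> (a1 + a2) * t"
proof -
  show "a1 \<le> 0"
    by (rule nonpos_if_bounded_below_on_lessThan[of t "b - a2 * (t - 1)"])
      (use assms[of _ "t - 1"] in \<open>simp add: algebra_simps\<close>)
  show "a2 \<le> 0"
    by (rule nonpos_if_bounded_below_on_lessThan[of t "b - a1 * (t - 1)"])
      (use assms[of "t - 1"] in \<open>simp add: algebra_simps\<close>)
  show "b \<le> (a1 + a2) * t"
  proof (rule field_le_epsilon)
    fix e :: real assume "e > 0"
    define d where "d = e / (\<bar>a1 + a2\<bar> + 1)"
    have "d > 0" "\<bar>a1 + a2\<bar> * d \<le> e"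
      using \<open>e > 0\<close> by (auto simp: d_def field_simps)
    have "b \<le> a1 * (t - d) + a2 * (t - d)"
      using \<open>d > 0\<close> by (intro assms) auto
    also have "\<dots> = (a1 + a2) * t + (- (a1 + a2)) * d"
      by (simp add: algebra_simps)
    also have "\<dots> \<le> (a1 + a2) * t + \<bar>a1 + a2\<bar> * d"
      using \<open>d > 0\<close> by (simp add: mult_right_mono)
    finally show "b \<le> (a1 + a2) * t + e"
      using \<open>\<bar>a1 + a2\<bar> * d \<le> e\<close> by linarith
  qed
qed

lemma minimax_two_affine:
  assumes Y: "convex Y" and u: "affine_on Y u" and v: "affine_on Y v"
    and mix: "\<And>m. 0 \<le> m \<Longrightarrow> m \<le> 1 \<Longrightarrow> \<exists>y\<in>Y. (1 - m) * u y + m * v y < t"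
  shows "\<exists>y\<in>Y. u y < t \<and> v y < t"
proof (rule ccontr)
  \<comment> \<open>Separate the image of Y in the plane from the open quadrant below (t, t); the
     normalised normal of the separating line is a weight m for which the hypothesis fails.\<close>
  assume none: "\<not> ?thesis"
  let ?K = "(\<lambda>y. (u y, v y)) ` Y" and ?Q = "{..<t} \<times> {..<t}"
  have "?K \<noteq> {}" using mix[of 0] by auto
  moreover have "?Q \<noteq> {}" by auto
  moreover have "?K \<inter> ?Q = {}" using none by auto
  ultimately obtain a b where "a \<noteq> 0" and K: "\<forall>k\<in>?K. inner a k \<le> b" and Q: "\<forall>q\<in>?Q. b \<le> inner a q"
    using separating_hyperplane_sets[OF convex_image_affine_pair[OF Y u v], of ?Q]
    by (auto simp: convex_Times)
  obtain a1 a2 where a: "a = (a1, a2)" by fastforce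
  have "b \<le> a1 * q1 + a2 * q2" if "q1 < t" "q2 < t" for q1 q2
    using Q that by (auto simp: a)
  then have quadrant: "a1 \<le> 0" "a2 \<le> 0" "b \<le> (a1 + a2) * t"
    using halfplane_above_lower_quadrant by blast+
  have "a1 + a2 < 0" using quadrant \<open>a \<noteq> 0\<close> by (auto simp: a zero_prod_def)
  define m where "m = a2 / (a1 + a2)"
  have "0 \<le> m" "m \<le> 1" "1 - m = a1 / (a1 + a2)"
    using quadrant \<open>a1 + a2 < 0\<close> by (auto simp: m_def field_simps)
  then obtain y where "y \<in> Y" and lt: "(1 - m) * u y + m * v y < t" using mix by blast
  have "(1 - m) * u y + m * v y = (a1 * u y + a2 * v y) / (a1 + a2)"
    using \<open>1 - m = a1 / (a1 + a2)\<close> by (simp add: m_def add_divide_distrib)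
  also have "\<dots> \<ge> t"
    using K \<open>y \<in> Y\<close> quadrant(3) \<open>a1 + a2 < 0\<close>
    by (auto simp: a neg_le_divide_eq mult.commute)
  finally show False using lt by simp
qed

lemma minimax_finite_affine:
  fixes A :: "'g::real_vector \<Rightarrow> 'y::real_vector \<Rightarrow> real"
  assumes "finite F" "convex Y" "Y \<noteq> {}"
    and "\<And>g. affine_on Y (A g)" and "\<And>y. affine_on UNIV (\<lambda>g. A g y)"
    and "\<And>g. g \<in> convex hull F \<Longrightarrow> \<exists>y\<in>Y. A g y < t"
  shows "\<exists>y\<in>Y. \<forall>f\<in>F. A f y < t"
  using assms
proof (induction F arbitrary: Y rule: finite_induct)
  case empty
  then show ?case by auto
next
  case (insert f F)
  define Y0 where "Y0 = {y \<in> Y. A f y < t}"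
  have f_hull: "f \<in> convex hull (insert f F)" by (simp add: hull_inc)
  have "\<exists>y\<in>Y0. A g y < t" if g: "g \<in> convex hull F" for g
  proof -
    have g_hull: "g \<in> convex hull (insert f F)" using g hull_mono[of F "insert f F"] by blast
    have "\<exists>y\<in>Y. (1 - m) * A g y + m * A f y < t" if "0 \<le> m" "m \<le> 1" for m
    proof -
      have "(1 - m) *\<^sub>R g + m *\<^sub>R f \<in> convex hull (insert f F)"
        using convexD[OF convex_convex_hull g_hull f_hull, of "1 - m" m] that by simp
      then obtain y where "y \<in> Y" "A ((1 - m) *\<^sub>R g + m *\<^sub>R f) y < t"
        using insert.prems(5) by blast
      then show ?thesis
        using affine_onD[OF insert.prems(4), of g f m] that by auto
    qed
    then show ?thesis
      using minimax_two_affine[OF insert.prems(1) insert.prems(3)[of g] insert.prems(3)[of f]]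
      by (auto simp: Y0_def)
  qed
  moreover have "convex Y0" "Y0 \<noteq> {}" "\<And>g. affine_on Y0 (A g)"
    using convex_affine_strict_sublevel[OF insert.prems(1,3)] insert.prems(5)[OF f_hull]
      affine_on_subset[OF insert.prems(3)] by (auto simp: Y0_def)
  ultimately obtain y where "y \<in> Y0" "\<forall>f\<in>F. A f y < t"
    using insert.IH insert.prems(4) by blast
  then show ?case by (auto simp: Y0_def)
qed

section \<open>The canonical embedding and Helly's lemma\<close>

lemma canon_apply [simp]: "blinfun_apply (canon x) f = blinfun_apply f x"
  unfolding canon_def
  by (subst bounded_linear_Blinfun_apply)
     (auto intro: bounded_bilinear.bounded_linear_left[OF bounded_bilinear_blinfun_apply])

lemma canon_diff: "canon (x - y) = canon x - canon y"
  by (rule blinfun_eqI) (simp add: blinfun.diff_right minus_blinfun.rep_eq)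

lemma norm_canon_le: "norm (canon x) \<le> norm x"
  by (rule norm_blinfun_bound) (auto, metis norm_blinfun mult.commute real_norm_def)

lemma dist_canon_le: "dist (canon x) (canon y) \<le> dist x y"
  unfolding dist_norm canon_diff[symmetric] by (rule norm_canon_le)

lemma abs_blinfun_diff_le: "norm g \<le> 1 \<Longrightarrow> \<bar>blinfun_apply g x - blinfun_apply g y\<bar> \<le> dist x y"
  using norm_blinfun[of g "x - y"] mult_right_mono[of "norm g" 1 "norm (x - y)"]
  by (simp add: blinfun.diff_right dist_norm)

lemma norm_real_blinfun_le:
  fixes \<phi> :: "'a::real_normed_vector \<Rightarrow>\<^sub>L real"
  assumes "0 \<le> t" and bound: "\<And>z. norm z = 1 \<Longrightarrow> blinfun_apply \<phi> z \<le> t"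
  shows "norm \<phi> \<le> t"
proof (rule norm_blinfun_bound[OF \<open>0 \<le> t\<close>])
  fix x :: 'a
  show "norm (blinfun_apply \<phi> x) \<le> t * norm x"
  proof (cases "x = 0")
    case False
    define z where "z = sgn x"
    have "norm z = 1" "norm (- z) = 1" using False by (auto simp: z_def norm_sgn)
    then have "\<bar>blinfun_apply \<phi> z\<bar> \<le> t"
      using bound[of z] bound[of "- z"] by (auto simp: blinfun.minus_right abs_le_iff)
    moreover have "blinfun_apply \<phi> x = norm x * blinfun_apply \<phi> z"
      using False by (simp add: z_def sgn_div_norm blinfun.scaleR_right)
    ultimately show ?thesis
      by (simp add: abs_mult mult.commute[of t] mult_left_mono)
  qed simp
qed

lemma exists_in_ball_apply_le:
  fixes \<phi> :: "('a::real_normed_vector \<Rightarrow>\<^sub>L real) \<Rightarrow>\<^sub>L real"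
  assumes "norm \<phi> < r"
  shows "\<exists>y\<in>ball 0 r. blinfun_apply g y \<le> blinfun_apply \<phi> g"
proof (cases "g = 0")
  case True
  have "0 < r" using assms norm_ge_zero[of \<phi>] by linarith
  with True show ?thesis by (intro bexI[of _ 0]) auto
next
  case False
  obtain \<rho> where \<rho>: "norm \<phi> < \<rho>" "\<rho> < r" using assms dense by blast
  then have "\<rho> > 0" using norm_ge_zero[of \<phi>] by linarith
  define s where "s = norm \<phi> * norm g / \<rho>"
  have "0 \<le> s" "s < norm (- g)"
    using \<rho> \<open>\<rho> > 0\<close> False by (auto simp: s_def field_simps)
  then obtain z where z: "norm z = 1" "s < - blinfun_apply g z"
    using norm_real_blinfun_le[of s "- g"] by (force simp: blinfun.minus_left)
  have "blinfun_apply g (\<rho> *\<^sub>R z) = \<rho> * blinfun_apply g z" by (simp add: blinfun.scaleR_right)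
  also have "\<dots> \<le> - (\<rho> * s)" using mult_strict_left_mono[OF z(2) \<open>\<rho> > 0\<close>] by simp
  also have "\<dots> = - (norm \<phi> * norm g)" using \<open>\<rho> > 0\<close> by (simp add: s_def)
  also have "\<dots> \<le> blinfun_apply \<phi> g" using norm_blinfun[of \<phi> g] by (simp add: abs_le_iff)
  finally show ?thesis using z(1) \<rho> \<open>\<rho> > 0\<close> by (intro bexI[of _ "\<rho> *\<^sub>R z"]) auto
qed

lemma helly_approximation:
  fixes \<phi> :: "('a::real_normed_vector \<Rightarrow>\<^sub>L real) \<Rightarrow>\<^sub>L real"
  assumes "finite H" "\<eta> > 0" "norm \<phi> < r"
  shows "\<exists>y. norm y < r \<and> (\<forall>h\<in>H. \<bar>blinfun_apply h y - blinfun_apply \<phi> h\<bar> < \<eta>)"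
proof -
  have "0 < r" using assms(3) norm_ge_zero[of \<phi>] by linarith
  define A where "A g y = blinfun_apply g y - blinfun_apply \<phi> g" for g y
  \<comment> \<open>Using both h and -h turns the one-sided minimax into a two-sided estimate.\<close>
  have "\<exists>y\<in>ball 0 r. \<forall>h\<in>H \<union> uminus ` H. A h y < \<eta>"
  proof (rule minimax_finite_affine)
    show "affine_on (ball 0 r) (A g)" for g
      unfolding A_def by (intro affine_on_diff affine_on_linear affine_on_const
          bounded_linear.linear[OF blinfun.bounded_linear_right])
    show "affine_on UNIV (\<lambda>g. A g y)" for y
      unfolding A_def
      by (intro affine_on_diff affine_on_linear bounded_linear.linear[OF blinfun.bounded_linear_left]
          bounded_linear.linear[OF blinfun.bounded_linear_right])
    show "\<exists>y\<in>ball 0 r. A g y < \<eta>" for g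
      using exists_in_ball_apply_le[OF assms(3), of g] assms(2) by (force simp: A_def)
  qed (use assms \<open>0 < r\<close> in auto)
  then obtain y where y: "norm y < r" "\<forall>h\<in>H \<union> uminus ` H. A h y < \<eta>" by auto
  have "\<bar>blinfun_apply h y - blinfun_apply \<phi> h\<bar> < \<eta>" if "h \<in> H" for h
  proof -
    have "A h y < \<eta>" "A (- h) y < \<eta>" using y(2) that by auto
    then show ?thesis by (simp add: A_def abs_less_iff blinfun.minus_right uminus_blinfun.rep_eq)
  qed
  with y(1) show ?thesis by blast
qed

lemma topspace_wstar [simp]: "topspace wstar = UNIV"
  unfolding wstar_def by (auto intro!: exI[of _ UNIV])

lemma continuous_map_wstar_eval: "continuous_map wstar euclideanreal (\<lambda>\<phi>. blinfun_apply \<phi> f)"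
  unfolding continuous_map_def
proof (intro conjI allI impI)
  fix U :: "real set"
  assume "openin euclideanreal U"
  then have "{\<phi>. blinfun_apply \<phi> f \<in> U} \<in> {{\<phi>. blinfun_apply \<phi> f \<in> U} | f U. open U}" by auto
  then have "openin wstar {\<phi>. blinfun_apply \<phi> f \<in> U}"
    unfolding wstar_def by (rule topology_generated_by_Basis)
  then show "openin wstar {\<phi> \<in> topspace wstar. blinfun_apply \<phi> f \<in> U}" by simp
qed auto

definition wstar_basic_nbhd ::
    "(('a::real_normed_vector \<Rightarrow>\<^sub>L real) \<Rightarrow>\<^sub>L real) \<Rightarrow> ('a \<Rightarrow>\<^sub>L real) set \<Rightarrow> real
      \<Rightarrow> (('a \<Rightarrow>\<^sub>L real) \<Rightarrow>\<^sub>L real) set" where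
  "wstar_basic_nbhd c H \<eta> = {\<psi>. \<forall>h\<in>H. \<bar>blinfun_apply \<psi> h - blinfun_apply c h\<bar> < \<eta>}"

lemma wstar_basic_nbhd_Un_min:
  "wstar_basic_nbhd c (H1 \<union> H2) (min \<eta>1 \<eta>2) \<subseteq> wstar_basic_nbhd c H1 \<eta>1 \<inter> wstar_basic_nbhd c H2 \<eta>2"
  unfolding wstar_basic_nbhd_def by auto

lemma wstar_basic_nbhd_subset_eval_preimage:
  assumes "open U" "blinfun_apply c f \<in> U"
  obtains \<eta> where "\<eta> > 0" "wstar_basic_nbhd c {f} \<eta> \<subseteq> {\<phi>. blinfun_apply \<phi> f \<in> U}"
proof -
  obtain \<eta> where "\<eta> > 0" "ball (blinfun_apply c f) \<eta> \<subseteq> U"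
    using assms open_contains_ball by blast
  then show ?thesis
    by (intro that[of \<eta>]) (auto simp: wstar_basic_nbhd_def dist_real_def abs_minus_commute)
qed

lemma openin_wstar_basic_nbhd:
  assumes "openin wstar T" "c \<in> T"
  shows "\<exists>H \<eta>. finite H \<and> \<eta> > 0 \<and> wstar_basic_nbhd c H \<eta> \<subseteq> T"
proof -
  have "generate_topology_on {{\<phi>. blinfun_apply \<phi> f \<in> U} | f U. open U} T"
    using assms(1) unfolding wstar_def by (rule openin_topology_generated_by)
  then have "\<forall>c\<in>T. \<exists>H \<eta>. finite H \<and> \<eta> > 0 \<and> wstar_basic_nbhd c H \<eta> \<subseteq> T"
  proof (induction rule: generate_topology_on.induct)
    case (Int a b)
    show ?case
    proof
      fix c assume "c \<in> a \<inter> b"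
      then obtain H1 \<eta>1 H2 \<eta>2 where "finite H1" "\<eta>1 > 0" "wstar_basic_nbhd c H1 \<eta>1 \<subseteq> a"
        "finite H2" "\<eta>2 > 0" "wstar_basic_nbhd c H2 \<eta>2 \<subseteq> b"
        using Int.IH by (meson IntD1 IntD2)
      then show "\<exists>H \<eta>. finite H \<and> \<eta> > 0 \<and> wstar_basic_nbhd c H \<eta> \<subseteq> a \<inter> b"
        using wstar_basic_nbhd_Un_min[of c H1 H2 \<eta>1 \<eta>2]
        by (intro exI[of _ "H1 \<union> H2"] exI[of _ "min \<eta>1 \<eta>2"]) auto
    qed
  next
    case (UN K)
    show ?case
    proof
      fix c assume "c \<in> \<Union>K"
      then obtain k where "k \<in> K" "c \<in> k" by blast
      then obtain H \<eta> where "finite H" "\<eta> > 0" "wstar_basic_nbhd c H \<eta> \<subseteq> k"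
        using UN.IH by meson
      with \<open>k \<in> K\<close> show "\<exists>H \<eta>. finite H \<and> \<eta> > 0 \<and> wstar_basic_nbhd c H \<eta> \<subseteq> \<Union>K"
        by blast
    qed
  next
    case (Basis s)
    then obtain f U where s: "s = {\<phi>. blinfun_apply \<phi> f \<in> U}" "open U" by blast
    show ?case
    proof
      fix c assume "c \<in> s"
      then obtain \<eta> where "\<eta> > 0" "wstar_basic_nbhd c {f} \<eta> \<subseteq> s"
        using wstar_basic_nbhd_subset_eval_preimage[OF s(2)] s(1) by blast
      then show "\<exists>H \<eta>. finite H \<and> \<eta> > 0 \<and> wstar_basic_nbhd c H \<eta> \<subseteq> s" by blast
    qed
  qed simp
  then show ?thesis using assms(2) by blast
qed

lemma in_wstar_closure_of_basic_nbhd: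
  assumes "\<And>H \<eta>. finite H \<Longrightarrow> \<eta> > 0 \<Longrightarrow> wstar_basic_nbhd c H \<eta> \<inter> S \<noteq> {}"
  shows "c \<in> wstar closure_of S"
  unfolding in_closure_of
proof (intro conjI allI impI)
  fix T assume "c \<in> T \<and> openin wstar T"
  then obtain H \<eta> where "finite H" "\<eta> > 0" "wstar_basic_nbhd c H \<eta> \<subseteq> T"
    using openin_wstar_basic_nbhd by blast
  then show "\<exists>y. y \<in> S \<and> y \<in> T" using assms by blast
qed simp

section \<open>Distance to a weak*-compact convex set\<close>

definition support_fun ::
    "(('a::real_normed_vector \<Rightarrow>\<^sub>L real) \<Rightarrow>\<^sub>L real) set \<Rightarrow> ('a \<Rightarrow>\<^sub>L real) \<Rightarrow> real" where
  "support_fun C f = (SUP c\<in>C. blinfun_apply c f)"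

lemma bdd_above_wstar_compact_eval:
  assumes "compactin wstar C"
  shows "bdd_above ((\<lambda>c. blinfun_apply c f) ` C)"
proof -
  have "compactin euclideanreal ((\<lambda>c. blinfun_apply c f) ` C)"
    by (rule image_compactin[OF assms continuous_map_wstar_eval])
  then show ?thesis by (simp add: compact_imp_bounded bounded_imp_bdd_above)
qed

lemma apply_le_support_fun:
  "compactin wstar C \<Longrightarrow> c \<in> C \<Longrightarrow> blinfun_apply c f \<le> support_fun C f"
  unfolding support_fun_def by (rule cSup_upper) (auto intro: bdd_above_wstar_compact_eval)

lemma less_support_fun_iff:
  "compactin wstar C \<Longrightarrow> C \<noteq> {} \<Longrightarrow> s < support_fun C f \<longleftrightarrow> (\<exists>c\<in>C. s < blinfun_apply c f)"
  unfolding support_fun_def by (simp add: less_cSup_iff bdd_above_wstar_compact_eval)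

lemma support_fun_zero: "C \<noteq> {} \<Longrightarrow> support_fun C 0 = 0"
  by (simp add: support_fun_def)

lemma wstar_minimax:
  fixes p :: "('a::real_normed_vector \<Rightarrow>\<^sub>L real) \<Rightarrow>\<^sub>L real"
  assumes C: "compactin wstar C" "convex C" "C \<noteq> {}"
    and lt: "\<And>g. norm g \<le> 1 \<Longrightarrow> \<exists>c\<in>C. blinfun_apply p g - blinfun_apply c g < t"
  shows "\<exists>c\<in>C. \<forall>g. norm g \<le> 1 \<longrightarrow> blinfun_apply p g - blinfun_apply c g \<le> t"
proof -
  define A where "A g c = blinfun_apply p g - blinfun_apply c g" for g c
  define U where "U g = {c. A g c \<le> t}" for g
  have "closedin wstar (U g)" for g
  proof -
    have "closedin wstar {c \<in> topspace wstar. blinfun_apply c g \<in> {blinfun_apply p g - t..}}"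
      by (rule closedin_continuous_map_preimage[OF continuous_map_wstar_eval]) simp
    moreover have "U g = {c \<in> topspace wstar. blinfun_apply c g \<in> {blinfun_apply p g - t..}}"
      by (auto simp: U_def A_def)
    ultimately show ?thesis by simp
  qed
  moreover have "C \<inter> \<Inter>\<F> \<noteq> {}" if \<F>: "finite \<F>" "\<F> \<subseteq> U ` cball 0 1" for \<F>
  proof -
    obtain G where G: "G \<subseteq> cball 0 1" "finite G" "\<F> = U ` G"
      using finite_subset_image[OF \<F>] by blast
    have hull: "convex hull G \<subseteq> cball 0 1" using G(1) by (simp add: hull_minimal)
    have "\<exists>c\<in>C. \<forall>f\<in>G. A f c < t"
    proof (rule minimax_finite_affine[OF G(2) C(2,3)])
      show "affine_on C (A g)" for g
        unfolding A_def by (intro affine_on_diff affine_on_linear affine_on_const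
            bounded_linear.linear[OF blinfun.bounded_linear_left])
      show "affine_on UNIV (\<lambda>g. A g c)" for c
        unfolding A_def by (intro affine_on_diff affine_on_linear
            bounded_linear.linear[OF blinfun.bounded_linear_right])
      show "\<exists>c\<in>C. A g c < t" if "g \<in> convex hull G" for g
        using lt[of g] that hull by (auto simp: A_def)
    qed
    then obtain c where "c \<in> C" "\<forall>f\<in>G. A f c < t" by blast
    then have "c \<in> C \<inter> \<Inter>\<F>" by (auto simp: G(3) U_def)
    then show ?thesis by blast
  qed
  ultimately have "C \<inter> \<Inter>(U ` cball 0 1) \<noteq> {}"
    using C(1) unfolding compactin_fip by blast
  then show ?thesis by (force simp: U_def A_def)
qed

lemma infdist_le_of_support_gap_bound:
  fixes p :: "('a::real_normed_vector \<Rightarrow>\<^sub>L real) \<Rightarrow>\<^sub>L real"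
  assumes C: "compactin wstar C" "convex C" "C \<noteq> {}"
    and gap: "\<And>g. norm g \<le> 1 \<Longrightarrow> blinfun_apply p g - support_fun C g < t"
  shows "infdist p C \<le> t"
proof -
  have "0 < t" using gap[of 0] support_fun_zero[OF C(3)] by simp
  have "\<exists>c\<in>C. blinfun_apply p g - blinfun_apply c g < t" if "norm g \<le> 1" for g
    using gap[OF that] less_support_fun_iff[OF C(1,3), of "blinfun_apply p g - t" g]
    by (auto simp: algebra_simps)
  then obtain c where "c \<in> C" and c: "\<And>g. norm g \<le> 1 \<Longrightarrow> blinfun_apply p g - blinfun_apply c g \<le> t"
    using wstar_minimax[OF C] by blast
  have "norm (p - c) \<le> t"
    using \<open>0 < t\<close> c by (intro norm_real_blinfun_le) (auto simp: minus_blinfun.rep_eq)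
  then show ?thesis
    using infdist_le[OF \<open>c \<in> C\<close>, of p] by (simp add: dist_norm)
qed

lemma exists_functional_support_gap_gt:
  fixes p :: "('a::real_normed_vector \<Rightarrow>\<^sub>L real) \<Rightarrow>\<^sub>L real"
  assumes "compactin wstar C" "convex C" "C \<noteq> {}" "\<epsilon> > 0"
  shows "\<exists>f. norm f \<le> 1 \<and> infdist p C - \<epsilon> < blinfun_apply p f - support_fun C f"
proof (rule ccontr)
  assume "\<not> ?thesis"
  then have "infdist p C \<le> infdist p C - \<epsilon> / 2"
    using assms by (intro infdist_le_of_support_gap_bound) force+
  with \<open>\<epsilon> > 0\<close> show False by simp
qed

section \<open>Countable norming subfamilies\<close>

lemma countable_subfamily_approx_sup:
  fixes \<Phi> :: "'a::metric_space \<Rightarrow> real" and P :: "'f \<Rightarrow> 'a \<Rightarrow> real"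
  assumes "separable_space TYPE('a)"
    and approx: "\<And>x \<epsilon>. \<epsilon> > 0 \<Longrightarrow> \<exists>f\<in>F. \<Phi> x - \<epsilon> < P f x"
    and P_lipschitz: "\<And>f x y. f \<in> F \<Longrightarrow> \<bar>P f x - P f y\<bar> \<le> dist x y"
    and \<Phi>_lipschitz: "\<And>x y. \<bar>\<Phi> x - \<Phi> y\<bar> \<le> dist x y"
  obtains fk :: "nat \<Rightarrow> 'f" where "range fk \<subseteq> F" "\<And>x \<epsilon>. \<epsilon> > 0 \<Longrightarrow> \<exists>k. \<Phi> x - \<epsilon> < P (fk k) x"
proof -
  obtain D :: "'a set" where "countable D" "closure D = UNIV"
    using assms(1) unfolding separable_space_def by blast
  define I where "I = D \<times> (UNIV :: nat set)"
  have "countable I" "I \<noteq> {}"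
    using \<open>countable D\<close> \<open>closure D = UNIV\<close> by (auto simp: I_def)
  have "\<forall>dm. \<exists>f. f \<in> F \<and> \<Phi> (fst dm) - 1 / real (Suc (snd dm)) < P f (fst dm)"
  proof
    fix dm :: "'a \<times> nat"
    show "\<exists>f. f \<in> F \<and> \<Phi> (fst dm) - 1 / real (Suc (snd dm)) < P f (fst dm)"
      using approx[of "1 / real (Suc (snd dm))" "fst dm"] by auto
  qed
  then obtain sel where sel: "\<And>d m. sel (d, m) \<in> F \<and> \<Phi> d - 1 / real (Suc m) < P (sel (d, m)) d"
    by (metis fst_conv snd_conv)
  define fk where "fk k = sel (from_nat_into I k)" for k
  have "range fk \<subseteq> F" using sel by (metis fk_def image_subsetI surj_pair)
  moreover have "\<exists>k. \<Phi> x - \<epsilon> < P (fk k) x" if "\<epsilon> > 0" for x \<epsilon>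
  proof -
    obtain d where "d \<in> D" "dist d x < \<epsilon> / 3"
    proof -
      have "x \<in> closure D" "\<epsilon> / 3 > 0" using \<open>closure D = UNIV\<close> \<open>\<epsilon> > 0\<close> by auto
      then show ?thesis using that unfolding closure_approachable by blast
    qed
    obtain m :: nat where "1 / real (Suc m) < \<epsilon> / 3"
      using \<open>\<epsilon> > 0\<close> nat_approx_posE[of "\<epsilon> / 3"] by auto
    obtain k where "from_nat_into I k = (d, m)"
      using from_nat_into_surj[OF \<open>countable I\<close>, of "(d, m)"] \<open>d \<in> D\<close> by (auto simp: I_def)
    then have "fk k = sel (d, m)" by (simp add: fk_def)
    then have "\<Phi> x - \<epsilon> < P (fk k) x"
      using sel[of d m] P_lipschitz[of "fk k" x d] \<Phi>_lipschitz[of x d] \<open>dist d x < \<epsilon> / 3\<close>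
        \<open>1 / real (Suc m) < \<epsilon> / 3\<close> by (auto simp: dist_commute abs_le_iff)
    then show ?thesis ..
  qed
  ultimately show ?thesis by (rule that)
qed

lemma norming_sequence_for_infdist:
  fixes C :: "(('a::real_normed_vector \<Rightarrow>\<^sub>L real) \<Rightarrow>\<^sub>L real) set"
  assumes "separable_space TYPE('a)" "compactin wstar C" "convex C" "C \<noteq> {}"
  shows "\<exists>f :: nat \<Rightarrow> 'a \<Rightarrow>\<^sub>L real. (\<forall>k. norm (f k) \<le> 1) \<and>
    (\<forall>x \<epsilon>. \<epsilon> > 0 \<longrightarrow> (\<exists>k. infdist (canon x) C - \<epsilon> < blinfun_apply (f k) x - support_fun C (f k)))"
proof -
  obtain fk :: "nat \<Rightarrow> 'a \<Rightarrow>\<^sub>L real" where fk: "range fk \<subseteq> {g. norm g \<le> 1}"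
    and approx: "\<And>x \<epsilon>. \<epsilon> > 0 \<Longrightarrow>
      \<exists>k. infdist (canon x) C - \<epsilon> < blinfun_apply (fk k) x - support_fun C (fk k)"
  proof (rule countable_subfamily_approx_sup[OF assms(1)])
    show "\<exists>g\<in>{g. norm g \<le> 1}. infdist (canon x) C - \<epsilon> < blinfun_apply g x - support_fun C g"
      if "\<epsilon> > 0" for x \<epsilon>
      using exists_functional_support_gap_gt[OF assms(2-4) that, of "canon x"] by simp
    show "\<bar>(blinfun_apply g x - support_fun C g) - (blinfun_apply g y - support_fun C g)\<bar>
        \<le> dist x y" if "g \<in> {g. norm g \<le> 1}" for g x y
      using abs_blinfun_diff_le[of g x y] that by simp
    show "\<bar>infdist (canon x) C - infdist (canon y) C\<bar> \<le> dist x y" for x y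
      using infdist_triangle_abs[of "canon x" C "canon y"] dist_canon_le[of x y] by linarith
  qed (rule that)
  then show ?thesis using approx by (intro exI[of _ fk]) auto
qed

section \<open>The approximating sets\<close>

definition halfspaces_approx ::
    "(nat \<Rightarrow> ('a::real_normed_vector \<Rightarrow>\<^sub>L real)) \<Rightarrow> (nat \<Rightarrow> real) \<Rightarrow> nat \<Rightarrow> 'a set" where
  "halfspaces_approx f s n = {y. \<forall>k\<le>n. blinfun_apply (f k) y \<le> s k + 1 / real (Suc n)}"

lemma closed_halfspaces_approx: "closed (halfspaces_approx f s n)"
proof -
  have "halfspaces_approx f s n = (\<Inter>k\<le>n. {y. blinfun_apply (f k) y \<le> s k + 1 / real (Suc n)})"
    by (auto simp: halfspaces_approx_def)
  then show ?thesis
    by (auto intro!: closed_Collect_le continuous_intros linear_continuous_on blinfun.bounded_linear_right)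
qed

lemma convex_halfspaces_approx: "convex (halfspaces_approx f s n)"
proof -
  have "halfspaces_approx f s n = (\<Inter>k\<le>n. blinfun_apply (f k) -` {..s k + 1 / real (Suc n)})"
    by (auto simp: halfspaces_approx_def)
  then show ?thesis
    by (auto intro!: convex_INT convex_linear_vimage bounded_linear.linear[OF blinfun.bounded_linear_right])
qed

lemma halfspaces_approx_Suc_subset: "halfspaces_approx f s (Suc n) \<subseteq> halfspaces_approx f s n"
proof
  fix y assume y: "y \<in> halfspaces_approx f s (Suc n)"
  have "1 / real (Suc (Suc n)) \<le> 1 / real (Suc n)" by (simp add: frac_le)
  moreover have "blinfun_apply (f k) y \<le> s k + 1 / real (Suc (Suc n))" if "k \<le> n" for k
    using y that by (simp add: halfspaces_approx_def)
  ultimately show "y \<in> halfspaces_approx f s n"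
    by (fastforce simp: halfspaces_approx_def)
qed

lemma exists_near_in_halfspaces_approx:
  fixes c :: "('a::real_normed_vector \<Rightarrow>\<^sub>L real) \<Rightarrow>\<^sub>L real"
  assumes c: "\<And>k. blinfun_apply c (f k) \<le> s k"
    and "finite H" "\<eta> > 0" "norm (c - canon x) < r"
  shows "\<exists>y\<in>halfspaces_approx f s n. norm (y - x) < r \<and>
           (\<forall>h\<in>H. \<bar>blinfun_apply h y - blinfun_apply c h\<bar> < \<eta>)"
proof -
  have "finite (H \<union> f ` {..n})" "min \<eta> (1 / real (Suc n)) > 0" using assms by auto
  then obtain z where z: "norm z < r" and close: "\<forall>h\<in>H \<union> f ` {..n}.
      \<bar>blinfun_apply h z - blinfun_apply (c - canon x) h\<bar> < min \<eta> (1 / real (Suc n))"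
    using helly_approximation assms(4) by blast
  have shift: "blinfun_apply h (x + z) - blinfun_apply c h = blinfun_apply h z - blinfun_apply (c - canon x) h"
    for h by (simp add: blinfun.add_right minus_blinfun.rep_eq)
  have "blinfun_apply (f k) (x + z) \<le> s k + 1 / real (Suc n)" if "k \<le> n" for k
  proof -
    have "\<bar>blinfun_apply (f k) (x + z) - blinfun_apply c (f k)\<bar> < 1 / real (Suc n)"
      using close that unfolding shift by fastforce
    with c[of k] show ?thesis by linarith
  qed
  then have "x + z \<in> halfspaces_approx f s n" by (simp add: halfspaces_approx_def)
  moreover have "\<forall>h\<in>H. \<bar>blinfun_apply h (x + z) - blinfun_apply c h\<bar> < \<eta>"
    using close unfolding shift by auto
  ultimately show ?thesis using z by (intro bexI[of _ "x + z"]) auto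
qed

lemma halfspaces_approx_nonempty:
  assumes "\<And>k. blinfun_apply c (f k) \<le> s k"
  shows "halfspaces_approx f s n \<noteq> {}"
  using exists_near_in_halfspaces_approx[of c f s "{}" 1 0 "norm (c - canon 0) + 1" n] assms by auto

lemma infdist_halfspaces_approx_ge:
  assumes "norm (f k) \<le> 1" "k \<le> n" "halfspaces_approx f s n \<noteq> {}"
  shows "blinfun_apply (f k) x - s k - 1 / real (Suc n) \<le> infdist (canon x) (canon ` halfspaces_approx f s n)"
proof -
  have ne: "canon ` halfspaces_approx f s n \<noteq> {}" using assms(3) by simp
  show ?thesis
    unfolding infdist_notempty[OF ne]
  proof (rule cINF_greatest[OF ne])
  fix a assume "a \<in> canon ` halfspaces_approx f s n"
  then obtain y where y: "y \<in> halfspaces_approx f s n" "a = canon y" by blast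
  have "blinfun_apply (f k) x - blinfun_apply (f k) y = blinfun_apply (canon x - a) (f k)"
    by (simp add: y(2) minus_blinfun.rep_eq)
  also have "\<dots> \<le> norm (canon x - a) * norm (f k)"
    using norm_blinfun[of "canon x - a" "f k"] by simp
  also have "\<dots> \<le> dist (canon x) a"
    using assms(1) by (simp add: dist_norm mult_left_le)
  finally show "blinfun_apply (f k) x - s k - 1 / real (Suc n) \<le> dist (canon x) a"
    using y(1) assms(2) by (auto simp: halfspaces_approx_def)
  qed
qed

lemma infdist_halfspaces_approx_less:
  assumes "\<And>k. blinfun_apply c (f k) \<le> s k" "norm (c - canon x) < a"
  shows "infdist (canon x) (canon ` halfspaces_approx f s n) < a"
proof -
  obtain y where "y \<in> halfspaces_approx f s n" "norm (y - x) < a"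
    using exists_near_in_halfspaces_approx[of c f s "{}" 1 x a n, OF assms(1)] assms(2) by auto
  then have "infdist (canon x) (canon ` halfspaces_approx f s n) \<le> dist x y"
    using infdist_le[of "canon y" "canon ` halfspaces_approx f s n" "canon x"] dist_canon_le[of x y]
    by auto
  with \<open>norm (y - x) < a\<close> show ?thesis by (simp add: dist_norm norm_minus_commute)
qed

lemma in_wstar_closure_of_halfspaces_approx:
  assumes "\<And>k. blinfun_apply c (f k) \<le> s k"
  shows "c \<in> wstar closure_of (canon ` halfspaces_approx f s n)"
proof (rule in_wstar_closure_of_basic_nbhd)
  fix H :: "('a \<Rightarrow>\<^sub>L real) set" and \<eta> :: real
  assume "finite H" "\<eta> > 0"
  obtain y where "y \<in> halfspaces_approx f s n" "\<forall>h\<in>H. \<bar>blinfun_apply h y - blinfun_apply c h\<bar> < \<eta>"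
    using exists_near_in_halfspaces_approx[of c f s H \<eta> 0 "norm (c - canon 0) + 1" n]
      assms \<open>finite H\<close> \<open>\<eta> > 0\<close> by auto
  then have "canon y \<in> wstar_basic_nbhd c H \<eta> \<inter> canon ` halfspaces_approx f s n"
    by (simp add: wstar_basic_nbhd_def)
  then show "wstar_basic_nbhd c H \<eta> \<inter> canon ` halfspaces_approx f s n \<noteq> {}" by blast
qed

lemma tendsto_infdist_halfspaces_approx:
  fixes C :: "(('a::real_normed_vector \<Rightarrow>\<^sub>L real) \<Rightarrow>\<^sub>L real) set"
  assumes "C \<noteq> {}"
    and below: "\<And>c k. c \<in> C \<Longrightarrow> blinfun_apply c (f k) \<le> s k"
    and norm_f: "\<And>k. norm (f k) \<le> 1"
    and approx: "\<And>\<epsilon>. \<epsilon> > 0 \<Longrightarrow> \<exists>k. infdist (canon x) C - \<epsilon> < blinfun_apply (f k) x - s k"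
  shows "(\<lambda>n. infdist (canon x) (canon ` halfspaces_approx f s n)) \<longlonglongrightarrow> infdist (canon x) C"
proof (rule order_tendstoI)
  fix a assume "a < infdist (canon x) C"
  define \<epsilon> where "\<epsilon> = (infdist (canon x) C - a) / 2"
  have "\<epsilon> > 0" using \<open>a < infdist (canon x) C\<close> by (simp add: \<epsilon>_def)
  obtain k where k: "infdist (canon x) C - \<epsilon> < blinfun_apply (f k) x - s k"
    using approx[OF \<open>\<epsilon> > 0\<close>] by blast
  obtain N where N: "1 / real (Suc N) < \<epsilon>"
    using nat_approx_posE[OF \<open>\<epsilon> > 0\<close>] by blast
  obtain c where "c \<in> C" using assms(1) by blast
  have "a < infdist (canon x) (canon ` halfspaces_approx f s n)" if "max k N \<le> n" for n
  proof -
    have "1 / real (Suc n) \<le> 1 / real (Suc N)" using that by (simp add: frac_le)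
    moreover have "blinfun_apply (f k) x - s k - 1 / real (Suc n)
        \<le> infdist (canon x) (canon ` halfspaces_approx f s n)"
      using that halfspaces_approx_nonempty[OF below[OF \<open>c \<in> C\<close>]]
      by (intro infdist_halfspaces_approx_ge norm_f) simp_all
    moreover have "infdist (canon x) C - \<epsilon> = a + \<epsilon>" by (simp add: \<epsilon>_def field_simps)
    ultimately show ?thesis using k N by linarith
  qed
  then show "\<forall>\<^sub>F n in sequentially. a < infdist (canon x) (canon ` halfspaces_approx f s n)"
    by (rule eventually_sequentiallyI)
next
  fix a assume "infdist (canon x) C < a"
  then have "(INF c\<in>C. dist (canon x) c) < a" by (simp add: infdist_notempty[OF assms(1)])
  then obtain c where "c \<in> C" "norm (c - canon x) < a"
    using cInf_lessD[of "(\<lambda>c. dist (canon x) c) ` C" a] assms(1)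
    by (auto simp: dist_norm norm_minus_commute)
  then show "\<forall>\<^sub>F n in sequentially. infdist (canon x) (canon ` halfspaces_approx f s n) < a"
    using infdist_halfspaces_approx_less[OF below] by simp
qed

theorem proposition3:
  fixes C :: "(('a::banach \<Rightarrow>\<^sub>L real) \<Rightarrow>\<^sub>L real) set"
  assumes "separable_space TYPE('a)"
    and "compactin wstar C" and "convex C"
    and "C \<inter> range canon = {}"
  shows "\<exists>Cn :: nat \<Rightarrow> 'a set.
           (\<forall>n. closed (Cn n) \<and> convex (Cn n)) \<and>
           (\<forall>n. Cn (Suc n) \<subseteq> Cn n) \<and>
           C \<subseteq> (\<Inter>n. wstar closure_of (canon ` Cn n)) \<and>
           (\<forall>x::'a. (\<lambda>n. infdist (canon x) (canon ` Cn n)) \<longlonglongrightarrow> infdist (canon x) C)"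
proof (cases "C = {}")
  case True
  have "infdist (canon x) (range canon) = 0" for x :: 'a by simp
  with True show ?thesis by (intro exI[of _ "\<lambda>n. UNIV"]) (simp add: infdist_def)
next
  case False
  obtain f :: "nat \<Rightarrow> 'a \<Rightarrow>\<^sub>L real" where f: "\<And>k. norm (f k) \<le> 1"
    and approx: "\<And>x \<epsilon>. \<epsilon> > 0 \<Longrightarrow>
      \<exists>k. infdist (canon x) C - \<epsilon> < blinfun_apply (f k) x - support_fun C (f k)"
    using norming_sequence_for_infdist[OF assms(1-3) False] by blast
  define Cn where "Cn = halfspaces_approx f (\<lambda>k. support_fun C (f k))"
  have below: "blinfun_apply c (f k) \<le> support_fun C (f k)" if "c \<in> C" for c k
    using apply_le_support_fun[OF assms(2) that] .
  show ?thesis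
  proof (intro exI[of _ Cn] conjI allI)
    show "closed (Cn n)" "convex (Cn n)" "Cn (Suc n) \<subseteq> Cn n" for n
      by (simp_all add: Cn_def closed_halfspaces_approx convex_halfspaces_approx
          halfspaces_approx_Suc_subset)
    show "C \<subseteq> (\<Inter>n. wstar closure_of (canon ` Cn n))"
      unfolding Cn_def using below by (blast intro: in_wstar_closure_of_halfspaces_approx)
    show "(\<lambda>n. infdist (canon x) (canon ` Cn n)) \<longlonglongrightarrow> infdist (canon x) C" for x
      unfolding Cn_def using False below f approx by (intro tendsto_infdist_halfspaces_approx) blast+
  qed
qed

end
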